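(* Let $(W_t)_{t\ge 0}$ be a standard Wiener process (Brownian motion) and let $\varepsilon>0$. Then, almost surely, the path $t\mapsto W_t$, $t\in[0,1]$, belongs to $A(\varepsilon)$, i.e. $\|W_\cdot\|_{A(\varepsilon)}<\infty$ almost surely, where $$\|f\|_{A(\varepsilon)}:=\sup_{j\in\mathbb{N}_0}\ \sup_{0\le k\le j}\ \sup_{0<t<1}\ \frac{2^{(j-k)/2}}{(j-k+1)^{\varepsilon}}\cdot\frac{(A_kf_j)^*(t)}{\sqrt{\log(1/t)+1}}$$ for $f\in C([0,1])$.
   Context: Let $I=[0,1]$. For $j\in\mathbb{N}_0$ and $m\in\{0,\dots,2^j-1\}$ let $I_{j,m}=[m2^{-j},(m+1)2^{-j}]$ and let $\chi_{j,m}$ be its indicator function. For $f\in C(I)$ define the (Faber) coefficients $$\lambda_{j,m}=\lambda_{j,m}(f)=-2^{j/2-1}\Big(f\big((m+1)2^{-j}\big)-2f\big((2m+1)2^{-j-1}\big)+f\big(m2^{-j}\big)\Big),$$ which are the coefficients of the uniformly convergent expansion $f(x)=f(0)(1-x)+f(1)x+\sum_{j\ge0}\sum_{m=0}^{2^j-1}2^{-j/2}\lambda_{j,m}v_{j,m}(x)$, where $v_{j,m}$ is the hat function supported on $I_{j,m}$, piecewise linear, equal to $0$ at the endpoints of $I_{j,m}$ and $1$ at its midpoint. Put $f_j=\sum_{m=0}^{2^j-1}\lambda_{j,m}\chi_{j,m}$. For integrable $g$ on $I$ and $k\in\mathbb{N}_0$, $(A_kg)(x)=\sum_{l=0}^{2^k-1}2^k\int_{I_{k,l}}g(t)\,dt\cdot\chi_{k,l}(x)$.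 For a measurable $h$ on $I$, $h^*(t)=\inf\{s\ge0: |\{x\in I:|h(x)|>s\}|\le t\}$ denotes the non-increasing rearrangement ($|\cdot|$ is Lebesgue measure). *)

theory Defs
  imports "HOL-Probability.Probability"
begin

definition wiener_process :: "'a measure \<Rightarrow> (real \<Rightarrow> 'a \<Rightarrow> real) \<Rightarrow> bool" where
  "wiener_process M W \<longleftrightarrow>
     prob_space M \<and>
     (\<forall>t\<ge>0. W t \<in> borel_measurable M) \<and>
     (AE \<omega> in M. W 0 \<omega> = 0) \<and>
     (AE \<omega> in M. continuous_on {0..} (\<lambda>t. W t \<omega>)) \<and>
     (\<forall>s t. 0 \<le> s \<and> s < t \<longrightarrow>
        distributed M lborel (\<lambda>\<omega>. W t \<omega> - W s \<omega>)
          (\<lambda>x. ennreal (normal_density 0 (sqrt (t - s)) x))) \<and>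
     (\<forall>(ts :: nat \<Rightarrow> real) n. 0 \<le> ts 0 \<and> (\<forall>i<n. ts i < ts (Suc i)) \<longrightarrow>
        prob_space.indep_vars M (\<lambda>_. borel) (\<lambda>i \<omega>. W (ts (Suc i)) \<omega> - W (ts i) \<omega>) {..<n})"

definition dyad :: "nat \<Rightarrow> nat \<Rightarrow> real set" where
  "dyad j m = {real m / 2 ^ j .. (real m + 1) / 2 ^ j}"

definition faber_coeff :: "(real \<Rightarrow> real) \<Rightarrow> nat \<Rightarrow> nat \<Rightarrow> real" where
  "faber_coeff f j m = - (2 powr (real j / 2 - 1)) *
     (f ((real m + 1) / 2 ^ j) - 2 * f ((2 * real m + 1) / 2 ^ (j + 1)) + f (real m / 2 ^ j))"

definition faber_level :: "(real \<Rightarrow> real) \<Rightarrow> nat \<Rightarrow> real \<Rightarrow> real" where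
  "faber_level f j x = (\<Sum>m<2 ^ j. faber_coeff f j m * indicator (dyad j m) x)"

definition dyad_avg :: "nat \<Rightarrow> (real \<Rightarrow> real) \<Rightarrow> real \<Rightarrow> real" where
  "dyad_avg k g x = (\<Sum>l<2 ^ k. 2 ^ k * integral (dyad k l) g * indicator (dyad k l) x)"

definition rearr :: "(real \<Rightarrow> real) \<Rightarrow> real \<Rightarrow> real" where
  "rearr h t = Inf {s. s \<ge> 0 \<and> measure lborel {x \<in> {0..1}. \<bar>h x\<bar> > s} \<le> t}"

definition A_norm :: "real \<Rightarrow> (real \<Rightarrow> real) \<Rightarrow> ereal" where
  "A_norm eps f = (SUP j. SUP k \<in> {0..j}. SUP t \<in> {0<..<1}.
     ereal (2 powr ((real j - real k) / 2) / (real j - real k + 1) powr eps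
            * rearr (dyad_avg k (faber_level f j)) t / sqrt (ln (1 / t) + 1)))"

end

(* Write j = d + k. On each dyadic interval I_{k,l} the average A_k f_j is constant, equal to
   2^((k-d)/2 - 1) B_l, where B_l is the alternating sum of the 2^(d+1) increments of f over the
   grid of mesh 2^-(j+1) inside I_{k,l}. Hence for 2^(i-k) <= t < 2^(i+1-k) the rearrangement
   (A_k f_j)^*(t) is at most 2^(-d/2) K (d+1)^eps sqrt(log(1/t) + 1) as soon as fewer than 2^i of
   the 2^k numbers 2^(k/2) |B_l| exceed K (d+1)^eps sqrt(k-i+1).
   For the Wiener process the 2^(k/2) B_l are independent standard Gaussians, so by the Gaussian
   tail bound and a union bound over the 2^i-element sets of blocks this fails with probability
   at most C exp(-K^2/4) (d+1)^-2 2^-k 2^-i. Summing over d, k and i, the exceptional set on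
   which the norm may exceed K has measure O(exp(-K^2/4)), which tends to 0 as K grows. *)

theory Submission
  imports Defs "HOL-Real_Asymp.Real_Asymp"
begin

section \<open>Dyadic averages and the rearrangement\<close>

lemma measure_dyad_Int_dyad:
  fixes j k l m :: nat
  assumes "k \<le> j"
  shows "measure lebesgue (dyad j m \<inter> dyad k l) =
    (if l*2^(j-k) \<le> m \<and> m < (l+1)*2^(j-k) then 1/2^j else 0)"
proof -
  define d where "d = j - k"
  define P :: real where "P = 2^d"
  have P: "(2::real)^j = 2^k * P"
    using assms unfolding P_def d_def by (simp flip: power_add)
  have Pnat: "P = real (2^d)" unfolding P_def by simp
  let ?a1 = "real m / 2^j" and ?b1 = "(real m + 1) / 2^j"
  let ?a2 = "real l / 2^k" and ?b2 = "(real l + 1) / 2^k"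
  have int: "dyad j m \<inter> dyad k l = {max ?a1 ?a2 .. min ?b1 ?b2}"
    unfolding dyad_def by auto
  have e1: "?a2 = real l * P / 2^j" and e2: "?b2 = (real l + 1) * P / 2^j"
    by (simp_all add: P P_def field_simps)
  show ?thesis
  proof (cases "l*2^(j-k) \<le> m \<and> m < (l+1)*2^(j-k)")
    case True
    then have "l*2^d \<le> m" "m+1 \<le> (l+1)*2^d" using d_def by auto
    then have "real (l*2^d) \<le> real m" "real (m+1) \<le> real ((l+1)*2^d)"
      by (simp_all only: of_nat_le_iff)
    then have "real l * P \<le> real m" "real m + 1 \<le> (real l + 1) * P"
      unfolding Pnat by (simp_all add: algebra_simps)
    then have "max ?a1 ?a2 = ?a1" "min ?b1 ?b2 = ?b1" unfolding e1 e2
      by (auto simp: max_def min_def divide_le_cancel)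
    then show ?thesis using True by (simp add: int divide_le_cancel diff_divide_distrib[symmetric])
  next
    case False
    then have "m+1 \<le> l*2^d \<or> (l+1)*2^d \<le> m" using d_def by auto
    then have "real (m+1) \<le> real (l*2^d) \<or> real ((l+1)*2^d) \<le> real m"
      by (simp only: of_nat_le_iff)
    then have "real m + 1 \<le> real l * P \<or> (real l + 1) * P \<le> real m"
      unfolding Pnat by (simp add: algebra_simps)
    then have "min ?b1 ?b2 \<le> max ?a1 ?a2" unfolding e1 e2
      by (auto simp: max_def min_def divide_le_cancel)
    then have "measure lebesgue (dyad j m \<inter> dyad k l) = 0"
      unfolding int by (cases "min ?b1 ?b2 = max ?a1 ?a2") auto
    then show ?thesis using False by simp
  qed
qed

lemma has_integral_indicator_dyad:
  fixes j k l m :: nat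
  assumes "k \<le> j"
  shows "((indicator (dyad j m) :: real \<Rightarrow> real) has_integral
    (if l*2^(j-k) \<le> m \<and> m < (l+1)*2^(j-k) then 1/2^j else 0)) (dyad k l)"
proof -
  have "dyad j m \<inter> dyad k l = cbox (max (real m / 2^j) (real l / 2^k)) (min ((real m+1)/2^j) ((real l+1)/2^k))"
    by (simp add: dyad_def cbox_interval)
  then have lm: "dyad j m \<inter> dyad k l \<in> lmeasurable" by simp
  then have "(indicator (dyad j m) :: real \<Rightarrow> real) integrable_on (dyad k l)"
    using integrable_on_indicator by blast
  from integrable_integral[OF this] show ?thesis
    unfolding integral_indicator[OF lm] measure_dyad_Int_dyad[OF assms] .
qed

lemma integral_dyad_faber_level:
  fixes j k l :: nat
  assumes "k \<le> j" "l < 2^k"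
  shows "integral (dyad k l) (faber_level f j) =
    (\<Sum>m\<in>{l*2^(j-k)..<(l+1)*2^(j-k)}. faber_coeff f j m) / 2^j"
proof -
  let ?P = "\<lambda>m. l*2^(j-k) \<le> m \<and> m < (l+1)*2^(j-k)"
  have "(faber_level f j has_integral
      (\<Sum>m<2^j. faber_coeff f j m * (if ?P m then 1/2^j else 0))) (dyad k l)"
    unfolding faber_level_def
    by (intro has_integral_sum has_integral_mult_right has_integral_indicator_dyad assms) auto
  then have "integral (dyad k l) (faber_level f j) =
      (\<Sum>m<2^j. if ?P m then faber_coeff f j m / 2^j else 0)"
    by (simp add: integral_unique if_distrib cong: if_cong)
  also have "\<dots> = (\<Sum>m\<in>{m\<in>{..<2^j}. ?P m}. faber_coeff f j m / 2^j)"
    by (rule sum.inter_filter[symmetric]) simp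
  also have "{m\<in>{..<2^j}. ?P m} = {l*2^(j-k)..<(l+1)*2^(j-k)}"
  proof -
    have "(l+1)*2^(j-k) \<le> (2::nat)^k * 2^(j-k)"
      using assms(2) by (intro mult_right_mono) auto
    also have "\<dots> = 2^j" using assms(1) by (simp flip: power_add)
    finally show ?thesis by auto
  qed
  finally show ?thesis by (simp add: sum_divide_distrib)
qed

lemma dyad_avg_eq_interior:
  fixes k l :: nat and x :: real
  assumes "l < 2^k" "real l < x * 2^k" "x * 2^k < real l + 1"
  shows "dyad_avg k g x = 2^k * integral (dyad k l) g"
proof -
  have "indicator (dyad k l') x = (if l' = l then 1 else (0::real))" for l'
  proof -
    have "x \<in> dyad k l' \<longleftrightarrow> real l' \<le> x * 2^k \<and> x * 2^k \<le> real l' + 1"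
      unfolding dyad_def by (simp add: field_simps)
    also have "\<dots> \<longleftrightarrow> l' = l"
      using assms by (auto simp flip: of_nat_less_iff)
    finally show ?thesis by (simp add: indicator_def)
  qed
  then have "dyad_avg k g x = (\<Sum>l'<2^k. if l' = l then 2^k * integral (dyad k l) g else 0)"
    unfolding dyad_avg_def by (intro sum.cong) auto
  then show ?thesis using assms(1) by simp
qed

lemma obtain_dyad_interior:
  fixes x :: real
  assumes "0 \<le> x" "x \<le> 1" "x \<notin> range (\<lambda>n. real n / 2^k)"
  obtains l where "l < 2^k" "real l < x * 2^k" "x * 2^k < real l + 1"
proof -
  have ne: "x * 2^k \<noteq> real n" for n
    using assms(3) by (auto simp: field_simps)
  define l where "l = nat \<lfloor>x * 2^k\<rfloor>"
  have fl0: "0 \<le> \<lfloor>x * 2^k\<rfloor>" using assms(1) by simp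
  have "real l \<le> x * 2^k" unfolding l_def using fl0 by linarith
  then have lx: "real l < x * 2^k" using ne[of l] by linarith
  have xl: "x * 2^k < real l + 1" unfolding l_def using fl0 by linarith
  have "x * 2^k < 2^k" using assms(2) ne[of "2^k"] by simp
  then have "l < 2^k" using lx by (metis of_nat_less_numeral_power_cancel_iff order.strict_trans)
  with lx xl show ?thesis using that by blast
qed

lemma measure_dyad_avg_gt_le:
  fixes k :: nat and s :: real and g :: "real \<Rightarrow> real"
  shows "measure lborel {x\<in>{0..1}. s < \<bar>dyad_avg k g x\<bar>} \<le>
    real (card {l\<in>{..<2^k}. s < \<bar>2^k * integral (dyad k l) g\<bar>}) / 2^k"
proof -
  define L where "L = {l\<in>{..<2^k}. s < \<bar>2^k * integral (dyad k l) g\<bar>}"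
  define D where "D = range (\<lambda>n::nat. real n / 2^k)"
  have Dnull: "D \<in> null_sets lborel" unfolding D_def by (intro countable_imp_null_set_lborel) auto
  have sub: "{x\<in>{0..1}. s < \<bar>dyad_avg k g x\<bar>} \<subseteq> (\<Union>l\<in>L. dyad k l) \<union> D"
  proof
    fix x assume x: "x \<in> {x\<in>{0..1}. s < \<bar>dyad_avg k g x\<bar>}"
    show "x \<in> (\<Union>l\<in>L. dyad k l) \<union> D"
    proof (cases "x \<in> D")
      case False
      then obtain l where l: "l < 2^k" "real l < x * 2^k" "x * 2^k < real l + 1"
        using x obtain_dyad_interior[of x k] unfolding D_def by auto
      then have "l \<in> L" using x dyad_avg_eq_interior[OF l] unfolding L_def by auto
      moreover have "x \<in> dyad k l" unfolding dyad_def using l by (simp add: field_simps)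
      ultimately show ?thesis by blast
    qed simp
  qed
  have "emeasure lborel {x\<in>{0..1}. s < \<bar>dyad_avg k g x\<bar>} \<le> emeasure lborel ((\<Union>l\<in>L. dyad k l) \<union> D)"
    by (rule emeasure_mono[OF sub]) (use Dnull in \<open>auto simp: dyad_def null_sets_def\<close>)
  also have "\<dots> \<le> emeasure lborel (\<Union>l\<in>L. dyad k l) + emeasure lborel D"
    by (rule emeasure_subadditive) (use Dnull in \<open>auto simp: dyad_def null_sets_def\<close>)
  also have "emeasure lborel D = 0" using Dnull by auto
  also have "emeasure lborel (\<Union>l\<in>L. dyad k l) \<le> (\<Sum>l\<in>L. emeasure lborel (dyad k l))"
    by (rule emeasure_subadditive_finite) (auto simp: L_def dyad_def)
  also have "\<dots> = (\<Sum>l\<in>L. ennreal (1 / 2^k))"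
    by (intro sum.cong refl) (simp add: dyad_def field_simps diff_divide_distrib[symmetric])
  also have "\<dots> = ennreal (real (card L) / 2^k)"
    by (simp add: ennreal_of_nat_eq_real_of_nat ennreal_mult'[symmetric])
  finally show ?thesis unfolding measure_def L_def[symmetric]
    by (intro enn2real_leI) auto
qed

lemma rearr_le:
  assumes "0 \<le> s" "measure lborel {x\<in>{0..1}. s < \<bar>h x\<bar>} \<le> t"
  shows "rearr h t \<le> s"
  unfolding rearr_def
  by (rule cInf_lower) (use assms in \<open>auto intro!: bdd_belowI[where m=0]\<close>)

section \<open>Faber levels as alternating sums of increments\<close>

lemma sum_alternating_pairs:
  fixes g :: "nat \<Rightarrow> real"
  shows "(\<Sum>m\<in>{a..<b}. g (2*m) - g (2*m+1)) = (\<Sum>i\<in>{2*a..<2*b}. (-1)^i * g i)"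
proof (induction b)
  case (Suc b)
  have "2 * Suc b = Suc (Suc (2*b))" by simp
  then show ?case using Suc by (cases "a \<le> b") (simp_all add: sum.op_ivl_Suc)
qed simp

definition dyadic_incr :: "(real \<Rightarrow> real) \<Rightarrow> nat \<Rightarrow> nat \<Rightarrow> real" where
  "dyadic_incr f j i = f (real (i+1) / 2^(j+1)) - f (real i / 2^(j+1))"

definition dyadic_block :: "nat \<Rightarrow> nat \<Rightarrow> nat set" where
  "dyadic_block d l = {l*2^(d+1)..<(l+1)*2^(d+1)}"

definition block_alt_sum :: "(real \<Rightarrow> real) \<Rightarrow> nat \<Rightarrow> nat \<Rightarrow> nat \<Rightarrow> real" where
  "block_alt_sum f d k l = (\<Sum>i\<in>dyadic_block d l. (-1)^i * dyadic_incr f (d+k) i)"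

lemma faber_coeff_eq_dyadic_incr:
  "faber_coeff f j m = 2 powr (real j / 2 - 1) * (dyadic_incr f j (2*m) - dyadic_incr f j (2*m+1))"
proof -
  have "(real m + 1) / 2^j = real (2*m+1+1) / 2^(j+1)" "real m / 2^j = real (2*m) / 2^(j+1)"
    "(2 * real m + 1) / 2 ^ (j + 1) = real (2*m+1) / 2^(j+1)"
    by (simp_all add: field_simps)
  then show ?thesis unfolding faber_coeff_def dyadic_incr_def by (simp add: algebra_simps)
qed

lemma sum_faber_coeff_eq_block_alt_sum:
  "(\<Sum>m\<in>{l*2^d..<(l+1)*2^d}. faber_coeff f (d+k) m) =
    2 powr (real (d+k) / 2 - 1) * block_alt_sum f d k l"
proof -
  have "(\<Sum>m\<in>{l*2^d..<(l+1)*2^d}. faber_coeff f (d+k) m) =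
     2 powr (real (d+k) / 2 - 1) *
       (\<Sum>m\<in>{l*2^d..<(l+1)*2^d}. dyadic_incr f (d+k) (2*m) - dyadic_incr f (d+k) (2*m+1))"
    unfolding faber_coeff_eq_dyadic_incr by (simp add: sum_distrib_left)
  also have "(\<Sum>m\<in>{l*2^d..<(l+1)*2^d}. dyadic_incr f (d+k) (2*m) - dyadic_incr f (d+k) (2*m+1)) =
      block_alt_sum f d k l"
    unfolding sum_alternating_pairs block_alt_sum_def dyadic_block_def
    by (simp add: mult.commute mult.left_commute)
  finally show ?thesis .
qed

lemma dyad_integral_faber_level:
  fixes d k l :: nat
  assumes "l < 2^k"
  shows "2 * 2 powr (real d / 2) * (2^k * integral (dyad k l) (faber_level f (d+k))) =
    2 powr (real k / 2) * block_alt_sum f d k l"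
proof -
  have "2 * 2 powr (real d / 2) * (2^k * integral (dyad k l) (faber_level f (d+k))) =
      2 * 2 powr (real d / 2) * (2^k / 2^(d+k)) * 2 powr (real (d+k) / 2 - 1) * block_alt_sum f d k l"
    using integral_dyad_faber_level[where j="d+k" and f=f, OF le_add2 assms, simplified add_diff_cancel_right']
    unfolding sum_faber_coeff_eq_block_alt_sum by simp
  also have "2^k / 2^(d+k) = (2::real) powr (- real d)"
    by (simp add: power_add powr_minus divide_simps powr_realpow)
  also have "2 * 2 powr (real d / 2) * 2 powr (- real d) * 2 powr (real (d+k) / 2 - 1) =
      (2::real) powr (1 + real d / 2 + - real d + (real (d+k) / 2 - 1))"
    by (simp only: powr_add powr_one[of 2] zero_le_numeral)
  also have "1 + real d / 2 + - real d + (real (d+k) / 2 - 1) = real k / 2"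
    by (simp add: field_simps)
  finally show ?thesis .
qed

section \<open>A deterministic bound for the norm\<close>

lemma obtain_power2_bracket:
  fixes y :: real
  assumes "1 \<le> y"
  obtains i where "2^i \<le> y" "y < 2^(i+1)"
proof
  define i where "i = nat \<lfloor>log 2 y\<rfloor>"
  have "\<lfloor>log 2 y\<rfloor> = int i" using assms unfolding i_def by simp
  then have "2 powr real i \<le> y \<and> y < 2 powr (real i + 1)"
    using floor_log_eq_powr_iff[of y 2 "int i"] assms by simp
  then show "2^i \<le> y" "y < 2^(i+1)"
    by (simp_all add: powr_realpow powr_add)
qed

lemma dyadic_scale_log_bound:
  fixes t :: real and i k :: nat
  assumes t: "0 < t" "t < 1" and ik: "i \<le> k" and upper: "t * 2^k < 2^(i+1)"
  shows "real (k - i) + 1 \<le> 4 * (ln (1/t) + 1)"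
proof (cases "k = i")
  case False
  define r where "r = k - i - 1"
  have "r + (i + 1) = k" using ik False unfolding r_def by simp
  then have "(2::real)^r * 2^(i+1) = 2^k" by (metis power_add)
  then have "t * 2^r * 2^(i+1) < 1 * 2^(i+1)" using upper by (simp add: mult.assoc)
  then have "(2::real)^r < 1/t" using t by (simp add: field_simps)
  then have "ln (2^r) < ln (1/t)" using t by (simp add: ln_less_cancel_iff)
  then have "real r * ln 2 < ln (1/t)" by (simp add: ln_realpow)
  moreover have "real r * (2/3) \<le> real r * ln 2" using ln2_ge_two_thirds by (intro mult_left_mono) auto
  ultimately have "real r * (2/3) < ln (1/t)" by linarith
  then have "real r + 2 \<le> 4 * ln (1/t) + 4" using of_nat_0_le_iff[of r, where 'a=real] by linarith
  moreover have "real (k - i) = real r + 1" using ik False unfolding r_def by simp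
  ultimately show ?thesis by simp
qed (use t in simp)

lemma obtain_dyadic_scale:
  fixes t :: real and k :: nat
  assumes t: "0 < t" "t < 1"
  obtains i where "i \<le> k" "\<And>c::nat. c < 2^i \<Longrightarrow> real c / 2^k \<le> t"
    "real (k - i) + 1 \<le> 4 * (ln (1/t) + 1)"
proof -
  obtain i where ik: "i \<le> k" and upper: "t * 2^k < 2^(i+1)" and lower: "i = 0 \<or> 2^i \<le> t * 2^k"
  proof (cases "t * 2^k < 1")
    case True
    then show ?thesis using that[of 0] by simp
  next
    case False
    then obtain i where i: "2^i \<le> t * 2^k" "t * 2^k < 2^(i+1)"
      using obtain_power2_bracket[of "t * 2^k"] by auto
    have "t * 2^k < 2^k" using t by simp
    then have "(2::real)^i < 2^k" using i(1) by linarith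
    then have "i \<le> k" by (simp add: power_strict_increasing_iff)
    then show ?thesis using that i by blast
  qed
  have "real c / 2^k \<le> t" if "c < 2^i" for c :: nat
  proof (cases "i = 0")
    case False
    have "real c \<le> 2^i" using that by (simp flip: of_nat_le_iff)
    then have "real c \<le> t * 2^k" using lower False by linarith
    then show ?thesis by (simp add: divide_le_eq)
  qed (use that t in simp)
  with ik dyadic_scale_log_bound[OF t ik upper] show ?thesis using that by blast
qed

definition large_blocks :: "real \<Rightarrow> real \<Rightarrow> (real \<Rightarrow> real) \<Rightarrow> nat \<Rightarrow> nat \<Rightarrow> nat \<Rightarrow> nat set" where
  "large_blocks K eps f d k r = {l\<in>{..<2^k}.
     K * (real d + 1) powr eps * sqrt (real r + 1) < 2 powr (real k / 2) * \<bar>block_alt_sum f d k l\<bar>}"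

lemma rearr_dyad_avg_faber_level_le:
  fixes f :: "real \<Rightarrow> real" and d k :: nat and K eps t :: real
  assumes K: "0 \<le> K" and t: "0 < t" "t < 1"
    and few: "\<And>i. i \<le> k \<Longrightarrow> card (large_blocks K eps f d k (k - i)) < 2^i"
  shows "2 powr (real d / 2) / (real d + 1) powr eps *
    rearr (dyad_avg k (faber_level f (d+k))) t / sqrt (ln (1/t) + 1) \<le> K"
proof -
  obtain i where ik: "i \<le> k" and count: "\<And>c::nat. c < 2^i \<Longrightarrow> real c / 2^k \<le> t"
    and log: "real (k - i) + 1 \<le> 4 * (ln (1/t) + 1)"
    using obtain_dyadic_scale[OF t, of k] by blast
  define L where "L = ln (1/t) + 1"
  have L1: "1 \<le> L" using t unfolding L_def by simp
  define s where "s = K * (real d + 1) powr eps * sqrt L / 2 powr (real d / 2)"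
  have s0: "0 \<le> s" unfolding s_def using K L1 by simp
  let ?c = "\<lambda>l. 2^k * integral (dyad k l) (faber_level f (d+k))"
  have sub: "{l\<in>{..<2^k}. s < \<bar>?c l\<bar>} \<subseteq> large_blocks K eps f d k (k - i)"
  proof (safe intro!: CollectI)
    fix l :: nat assume l: "l < 2^k" "s < \<bar>?c l\<bar>"
    have "sqrt (real (k - i) + 1) \<le> sqrt (4 * L)" using log unfolding L_def by simp
    then have "K * (real d + 1) powr eps * sqrt (real (k - i) + 1) \<le> K * (real d + 1) powr eps * (2 * sqrt L)"
      using K by (intro mult_left_mono) (auto simp: real_sqrt_mult)
    also have "\<dots> = 2 * 2 powr (real d / 2) * s" unfolding s_def by simp
    also have "\<dots> < 2 * 2 powr (real d / 2) * \<bar>?c l\<bar>" using l(2) by simp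
    also have "\<dots> = 2 powr (real k / 2) * \<bar>block_alt_sum f d k l\<bar>"
      using arg_cong[OF dyad_integral_faber_level[OF l(1)], of abs] by (simp add: abs_mult)
    finally show "l \<in> large_blocks K eps f d k (k - i)" using l(1) unfolding large_blocks_def by simp
  qed
  have "card {l\<in>{..<2^k}. s < \<bar>?c l\<bar>} \<le> card (large_blocks K eps f d k (k - i))"
    by (rule card_mono[OF _ sub]) (simp add: large_blocks_def)
  then have "card {l\<in>{..<2^k}. s < \<bar>?c l\<bar>} < 2^i" using few[OF ik] by linarith
  then have "measure lborel {x\<in>{0..1}. s < \<bar>dyad_avg k (faber_level f (d+k)) x\<bar>} \<le> t"
    by (rule order_trans[OF measure_dyad_avg_gt_le count])
  then have "rearr (dyad_avg k (faber_level f (d+k))) t \<le> s" by (rule rearr_le[OF s0])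
  then have "2 powr (real d / 2) / (real d + 1) powr eps / sqrt L * rearr (dyad_avg k (faber_level f (d+k))) t
      \<le> 2 powr (real d / 2) / (real d + 1) powr eps / sqrt L * s"
    using L1 by (intro mult_left_mono) auto
  also have "\<dots> = K" unfolding s_def using L1 by (simp add: field_simps)
  finally show ?thesis unfolding L_def by simp
qed

(* For i > k this never holds: there are only 2^k blocks. *)
definition many_large_blocks :: "real \<Rightarrow> real \<Rightarrow> (real \<Rightarrow> real) \<Rightarrow> nat \<Rightarrow> nat \<Rightarrow> nat \<Rightarrow> bool" where
  "many_large_blocks K eps f d k i \<longleftrightarrow> 2^i \<le> card (large_blocks K eps f d k (k - i))"

lemma A_norm_le:
  fixes f :: "real \<Rightarrow> real" and K eps :: real
  assumes "0 \<le> K" and few: "\<And>d k i. \<not> many_large_blocks K eps f d k i"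
  shows "A_norm eps f \<le> ereal K"
  unfolding A_norm_def
proof (intro SUP_least)
  fix j k :: nat and t :: real
  assume k: "k \<in> {0..j}" and t: "t \<in> {0<..<1}"
  define d where "d = j - k"
  have jd: "j = d + k" and "real j - real k = real d" using k unfolding d_def by (simp_all add: of_nat_diff)
  moreover have "2 powr (real d / 2) / (real d + 1) powr eps *
      rearr (dyad_avg k (faber_level f (d+k))) t / sqrt (ln (1/t) + 1) \<le> K"
    using rearr_dyad_avg_faber_level_le[OF assms(1) _ _ few[unfolded many_large_blocks_def not_le]] t
    by simp
  ultimately show "ereal (2 powr ((real j - real k) / 2) / (real j - real k + 1) powr eps *
      rearr (dyad_avg k (faber_level f j)) t / sqrt (ln (1 / t) + 1)) \<le> ereal K"
    unfolding jd by simp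
qed

lemma power_div_fact_le_exp:
  fixes x :: real
  assumes "0 \<le> x"
  shows "x^m / fact m \<le> exp x"
proof -
  have s: "(\<lambda>n. x^n / fact n) sums exp x"
    using exp_converges[of x] by (simp add: divide_inverse mult.commute)
  have "(\<Sum>n\<in>{m}. x^n / fact n) \<le> (\<Sum>n. x^n / fact n)"
    by (rule sum_le_suminf) (use s assms in \<open>auto simp: sums_iff\<close>)
  then show ?thesis using s by (simp add: sums_iff)
qed

lemma binomial_le_exp_pow:
  assumes "1 \<le> m"
  shows "real (n choose m) \<le> (exp 1 * real n / real m)^m"
proof -
  have "real (n choose m) * fact m \<le> real n ^ m"
    using binomial_fact_pow[of n m] by (metis of_nat_fact of_nat_le_iff of_nat_mult of_nat_power)
  then have "real (n choose m) \<le> real n ^ m / fact m"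
    by (simp add: field_simps)
  also have "\<dots> = (real n / real m)^m * (real m ^ m / fact m)"
    using assms by (simp add: power_divide field_simps)
  also have "\<dots> \<le> (real n / real m)^m * exp (real m)"
    by (intro mult_left_mono power_div_fact_le_exp) auto
  also have "exp (real m) = exp 1 ^ m" by (simp add: exp_of_nat_mult[symmetric])
  also have "(real n / real m)^m * exp 1 ^ m = (exp 1 * real n / real m)^m"
    by (simp add: power_mult_distrib[symmetric] mult.commute)
  finally show ?thesis .
qed

lemma power_pow2_le:
  fixes b :: real and i r :: nat
  assumes b: "0 \<le> b" "b \<le> 1/4"
  shows "(b * (1/2)^r)^(2^i) \<le> b * (1/2)^(i + r) * (1/2)^i"
proof -
  have im: "i + 1 \<le> 2^i" using less_exp[of i] by (simp add: Suc_leI)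
  have "(b * (1/2)^r)^(2^i) = b^(2^i) * ((1/2)^r)^(2^i)" by (simp only: power_mult_distrib)
  also have "\<dots> \<le> b^(i+1) * (1/2)^r"
  proof (intro mult_mono)
    show "b^(2^i) \<le> b^(i+1)" using im b by (intro power_decreasing) auto
    have "((1/2::real)^r)^(2^i) \<le> ((1/2)^r)^1" by (intro power_decreasing) (auto simp: power_le_one)
    then show "((1/2::real)^r)^(2^i) \<le> (1/2)^r" by simp
  qed (use b in auto)
  also have "b^(i+1) * (1/2)^r \<le> b * (1/4)^i * (1/2)^r"
    using b by (simp only: power_Suc Suc_eq_plus1[symmetric])
      (intro mult_right_mono mult_left_mono power_mono, auto)
  also have "b * (1/4::real)^i * (1/2)^r = b * (1/2)^(i + r) * (1/2)^i"
    by (simp add: power_add power_mult_distrib[symmetric] mult_ac)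
  finally show ?thesis .
qed

lemma binomial_tail_product_le:
  fixes y :: real and i k :: nat
  assumes y: "0 \<le> y" "y \<le> 1/64"
  shows "real (2^k choose 2^i) * (sqrt 2 * y^(k - i + 1))^(2^i) \<le> exp 1 * sqrt 2 * y * (1/2)^k * (1/2)^i"
proof (cases "i \<le> k")
  case False
  then have "(2::nat)^k < 2^i" by simp
  then show ?thesis using y by (simp add: binomial_eq_0)
next
  case True
  define r where "r = k - i"
  have kir: "k = i + r" using True r_def by simp
  define b where "b = exp 1 * sqrt 2 * y"
  have "sqrt 2 \<le> 3/2" by (rule real_le_lsqrt) (auto simp: power2_eq_square)
  then have "b \<le> 3 * (3/2) * y" unfolding b_def using exp_le y
    by (intro mult_right_mono mult_mono) auto
  then have b: "0 \<le> b" "b \<le> 1/4" using y unfolding b_def by simp_all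
  have "real (2^k choose 2^i) \<le> (exp 1 * 2^r)^(2^i)"
  proof -
    have "real ((2::nat)^k) / real ((2::nat)^i) = 2^r" unfolding kir by (simp add: power_add)
    then show ?thesis using binomial_le_exp_pow[of "2^i" "2^k"]
      by (simp only: times_divide_eq_right[symmetric]) simp
  qed
  then have "real (2^k choose 2^i) * (sqrt 2 * y^(r+1))^(2^i) \<le> (exp 1 * 2^r)^(2^i) * (sqrt 2 * y^(r+1))^(2^i)"
    using y by (intro mult_right_mono) auto
  also have "\<dots> = (b * (2*y)^r)^(2^i)"
  proof -
    have "(exp 1 * 2^r) * (sqrt 2 * y^(r+1)) = b * (2*y)^r"
      unfolding b_def by (simp add: power_mult_distrib mult_ac)
    then show ?thesis by (simp only: power_mult_distrib[symmetric])
  qed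
  also have "\<dots> \<le> (b * (1/2)^r)^(2^i)"
    using y b by (intro power_mono mult_left_mono) auto
  also have "\<dots> \<le> b * (1/2)^k * (1/2)^i"
    unfolding kir by (rule power_pow2_le[OF b])
  finally show ?thesis unfolding r_def b_def .
qed

lemma exp_neg_sq_quarter_le:
  fixes K :: real
  assumes "5 \<le> K"
  shows "exp (- K\<^sup>2 / 4) \<le> 1/64"
proof -
  have "25 \<le> K\<^sup>2" using assms power_mono[of 5 K 2] by simp
  then have "exp (- K\<^sup>2 / 4) \<le> exp (-6)" by simp
  also have "exp (-6::real) \<le> 1/64"
  proof -
    have "(2::real)^6 \<le> exp 1 ^ 6" using exp_ge_add_one_self[of 1] by (intro power_mono) auto
    then have "64 \<le> exp (6::real)" by (simp add: exp_of_nat_mult[symmetric])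
    then show ?thesis by (simp add: exp_minus field_simps)
  qed
  finally show ?thesis .
qed

lemma exp_neg_level_le:
  fixes K eps :: real and d :: nat
  assumes "4 \<le> K\<^sup>2 * eps"
  shows "exp (- K\<^sup>2 * (real d + 1) powr (2*eps) / 4) \<le> exp (- K\<^sup>2 / 4) / (real d + 1)^2"
proof -
  define D where "D = real d + 1"
  have D1: "1 \<le> D" unfolding D_def by simp
  have "1 + 2*eps * ln D \<le> exp (2*eps * ln D)" by (rule exp_ge_add_one_self)
  also have "\<dots> = D powr (2*eps)" using D1 by (simp add: powr_def mult.commute)
  finally have Dp: "1 + 2*eps*ln D \<le> D powr (2*eps)" .
  have "K\<^sup>2/4 + 2 * ln D \<le> K\<^sup>2/4 + (K\<^sup>2 * eps / 2) * ln D"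
    using assms D1 by (intro add_left_mono mult_right_mono) auto
  also have "\<dots> = K\<^sup>2/4 * (1 + 2*eps*ln D)" by (simp add: algebra_simps)
  also have "\<dots> \<le> K\<^sup>2/4 * D powr (2*eps)" using Dp by (intro mult_left_mono) auto
  finally have "exp (- K\<^sup>2 * D powr (2*eps) / 4) \<le> exp (- K\<^sup>2/4 - 2 * ln D)" by simp
  also have "\<dots> = exp (- K\<^sup>2 / 4) / D^2"
    using D1 by (simp add: exp_diff exp_of_nat_mult[of 2, simplified])
  finally show ?thesis unfolding D_def .
qed

lemma summable_inverse_Suc_squared: "summable (\<lambda>d::nat. 1 / (real d + 1)^2)"
proof -
  have "summable (\<lambda>n::nat. inverse (real n ^ 2))" by (rule inverse_power_summable) simp
  then have "summable (\<lambda>n::nat. inverse (real (Suc n) ^ 2))" by (subst summable_Suc_iff)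
  then show ?thesis by (simp add: inverse_eq_divide add.commute)
qed

lemma suminf_ennreal_geometric_half:
  fixes c :: real
  assumes "0 \<le> c"
  shows "(\<Sum>i. ennreal (c * (1/2)^i)) = ennreal (2 * c)"
proof -
  have "(\<lambda>i. c * (1/2::real)^i) sums (c * (1 / (1 - 1/2)))"
    by (intro sums_mult geometric_sums) simp
  then show ?thesis
    using assms by (simp add: suminf_ennreal2 sums_iff summable_mult summable_geometric)
qed

section \<open>Gaussian tails, independent events and exceptional sets\<close>

lemma normal_density_le_scaled_normal_density:
  fixes \<sigma> u x :: real
  assumes "0 < \<sigma>" "0 \<le> u" "u < \<bar>x\<bar>"
  shows "normal_density 0 \<sigma> x \<le> sqrt 2 * exp (- u\<^sup>2 / (4 * \<sigma>\<^sup>2)) * normal_density 0 (sqrt 2 * \<sigma>) x"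
proof -
  have sq: "(sqrt 2 * \<sigma>)\<^sup>2 = 2 * \<sigma>\<^sup>2" by (simp add: power_mult_distrib)
  have s: "sqrt (2 * pi * (sqrt 2 * \<sigma>)\<^sup>2) = sqrt 2 * sqrt (2 * pi * \<sigma>\<^sup>2)"
    unfolding sq by (simp add: real_sqrt_mult[symmetric] mult.left_commute)
  have "u\<^sup>2 \<le> \<bar>x\<bar>\<^sup>2" using assms(2,3) by (intro power_mono) auto
  then have u2: "u\<^sup>2 \<le> x\<^sup>2" by simp
  have s4: "0 < 4 * \<sigma>\<^sup>2" using assms(1) by simp
  have ex: "- x\<^sup>2 / (2 * \<sigma>\<^sup>2) \<le> - u\<^sup>2 / (4 * \<sigma>\<^sup>2) + - x\<^sup>2 / (2 * (sqrt 2 * \<sigma>)\<^sup>2)"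
  proof -
    have "- x\<^sup>2 / (2 * \<sigma>\<^sup>2) = (- 2 * x\<^sup>2) / (4 * \<sigma>\<^sup>2)" by simp
    also have "\<dots> \<le> (- u\<^sup>2 - x\<^sup>2) / (4 * \<sigma>\<^sup>2)"
      using u2 s4 by (intro divide_right_mono) auto
    also have "\<dots> = - u\<^sup>2 / (4 * \<sigma>\<^sup>2) + - x\<^sup>2 / (2 * (sqrt 2 * \<sigma>)\<^sup>2)"
      unfolding sq by (simp add: diff_divide_distrib)
    finally show ?thesis .
  qed
  have e: "exp (- x\<^sup>2 / (2 * \<sigma>\<^sup>2)) \<le> exp (- u\<^sup>2 / (4 * \<sigma>\<^sup>2)) * exp (- x\<^sup>2 / (2 * (sqrt 2 * \<sigma>)\<^sup>2))"
    using ex by (simp only: exp_add[symmetric] exp_le_cancel_iff)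
  have p: "0 < sqrt (2 * pi * \<sigma>\<^sup>2)" using assms(1) by simp
  have r: "sqrt 2 * exp (- u\<^sup>2 / (4 * \<sigma>\<^sup>2)) * (1 / sqrt (2 * pi * (sqrt 2 * \<sigma>)\<^sup>2) * exp (- (x - 0)\<^sup>2 / (2 * (sqrt 2 * \<sigma>)\<^sup>2)))
     = (exp (- u\<^sup>2 / (4 * \<sigma>\<^sup>2)) * exp (- x\<^sup>2 / (2 * (sqrt 2 * \<sigma>)\<^sup>2))) / sqrt (2 * pi * \<sigma>\<^sup>2)"
    unfolding s by simp
  have l: "1 / sqrt (2 * pi * \<sigma>\<^sup>2) * exp (- (x - 0)\<^sup>2 / (2 * \<sigma>\<^sup>2)) = exp (- x\<^sup>2 / (2 * \<sigma>\<^sup>2)) / sqrt (2 * pi * \<sigma>\<^sup>2)"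
    by simp
  show ?thesis unfolding normal_density_def r l
    using e p by (intro divide_right_mono) auto
qed

lemma (in prob_space) prob_normal_abs_gt_le:
  assumes X: "distributed M lborel X (\<lambda>x. ennreal (normal_density 0 \<sigma> x))" and \<sigma>: "0 < \<sigma>" and u: "0 \<le> u"
  shows "prob {\<omega>\<in>space M. u < \<bar>X \<omega>\<bar>} \<le> sqrt 2 * exp (- u\<^sup>2 / (4 * \<sigma>\<^sup>2))"
proof -
  let ?A = "{x::real. u < \<bar>x\<bar>}"
  have A: "?A \<in> sets lborel" by simp
  have eq: "{\<omega>\<in>space M. u < \<bar>X \<omega>\<bar>} = X -` ?A \<inter> space M" by auto
  have "emeasure M (X -` ?A \<inter> space M) = (\<integral>\<^sup>+x. ennreal (normal_density 0 \<sigma> x) * indicator ?A x \<partial>lborel)"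
    by (rule distributed_emeasure[OF X A])
  also have "\<dots> \<le> (\<integral>\<^sup>+x. ennreal (sqrt 2 * exp (- u\<^sup>2 / (4 * \<sigma>\<^sup>2))) * ennreal (normal_density 0 (sqrt 2 * \<sigma>) x) \<partial>lborel)"
  proof (intro nn_integral_mono)
    fix x :: real
    show "ennreal (normal_density 0 \<sigma> x) * indicator ?A x \<le>
        ennreal (sqrt 2 * exp (- u\<^sup>2 / (4 * \<sigma>\<^sup>2))) * ennreal (normal_density 0 (sqrt 2 * \<sigma>) x)"
    proof (cases "u < \<bar>x\<bar>")
      case True
      then show ?thesis using normal_density_le_scaled_normal_density[OF \<sigma> u True]
        by (simp add: ennreal_mult'[symmetric] ennreal_leI)
    qed simp
  qed
  also have "\<dots> = ennreal (sqrt 2 * exp (- u\<^sup>2 / (4 * \<sigma>\<^sup>2))) * (\<integral>\<^sup>+x. ennreal (normal_density 0 (sqrt 2 * \<sigma>) x) \<partial>lborel)"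
    by (rule nn_integral_cmult) simp
  also have "(\<integral>\<^sup>+x. ennreal (normal_density 0 (sqrt 2 * \<sigma>) x) \<partial>lborel) = 1"
    using \<sigma> by (subst nn_integral_eq_integral) (auto intro!: integrable_normal_density integral_normal_density)
  finally have "emeasure M {\<omega>\<in>space M. u < \<bar>X \<omega>\<bar>} \<le> ennreal (sqrt 2 * exp (- u\<^sup>2 / (4 * \<sigma>\<^sup>2)))"
    unfolding eq by simp
  then show ?thesis unfolding measure_def by (intro enn2real_leI) auto
qed

lemma Collect_card_ge_eq_UN_INT:
  fixes A :: "nat \<Rightarrow> 'a set" and n m :: nat
  assumes A: "\<And>l. l < n \<Longrightarrow> A l \<subseteq> \<Omega>" and m: "1 \<le> m"
  shows "{x\<in>\<Omega>. m \<le> card {l\<in>{..<n}. x \<in> A l}} = (\<Union>S\<in>{S. S \<subseteq> {..<n} \<and> card S = m}. \<Inter>l\<in>S. A l)"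
proof (intro equalityI subsetI)
  fix x assume "x \<in> {x\<in>\<Omega>. m \<le> card {l\<in>{..<n}. x \<in> A l}}"
  then obtain S where "S \<subseteq> {l\<in>{..<n}. x \<in> A l}" "card S = m"
    using obtain_subset_with_card_n by blast
  then show "x \<in> (\<Union>S\<in>{S. S \<subseteq> {..<n} \<and> card S = m}. \<Inter>l\<in>S. A l)" by blast
next
  fix x assume "x \<in> (\<Union>S\<in>{S. S \<subseteq> {..<n} \<and> card S = m}. \<Inter>l\<in>S. A l)"
  then obtain S where S: "S \<subseteq> {..<n}" "card S = m" and x: "x \<in> (\<Inter>l\<in>S. A l)" by blast
  obtain l where "l \<in> S" using S(2) m by fastforce
  then have "x \<in> \<Omega>" using A S(1) x by blast
  moreover have "card S \<le> card {l\<in>{..<n}. x \<in> A l}"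
    using S x by (intro card_mono) auto
  ultimately show "x \<in> {x\<in>\<Omega>. m \<le> card {l\<in>{..<n}. x \<in> A l}}" using S(2) by simp
qed

lemma (in prob_space) prob_card_indep_events_ge_le:
  assumes indep: "indep_events A {..<n}" and q: "\<And>l. l < n \<Longrightarrow> prob (A l) \<le> q" and m: "1 \<le> m"
  shows "{\<omega>\<in>space M. m \<le> card {l\<in>{..<n}. \<omega> \<in> A l}} \<in> events"
    and "prob {\<omega>\<in>space M. m \<le> card {l\<in>{..<n}. \<omega> \<in> A l}} \<le> real (n choose m) * q^m"
proof -
  let ?F = "{S. S \<subseteq> {..<n} \<and> card S = m}"
  have finF: "finite ?F" by (rule finite_subset[of _ "Pow {..<n}"]) auto
  have S: "finite S" "S \<noteq> {}" if "S \<in> ?F" for S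
    using that m finite_subset[of S "{..<n}"] by auto
  have A: "A l \<in> events" if "l < n" for l
    using indep that unfolding indep_events_def by auto
  have ev: "(\<Inter>l\<in>S. A l) \<in> events" if "S \<in> ?F" for S
    using S[OF that] that A by (intro sets.finite_INT) auto
  have E: "{\<omega>\<in>space M. m \<le> card {l\<in>{..<n}. \<omega> \<in> A l}} = (\<Union>S\<in>?F. \<Inter>l\<in>S. A l)"
    by (rule Collect_card_ge_eq_UN_INT) (use A sets.sets_into_space m in auto)
  show "{\<omega>\<in>space M. m \<le> card {l\<in>{..<n}. \<omega> \<in> A l}} \<in> events"
    unfolding E using finF ev by (intro sets.finite_UN) auto
  have "prob (\<Union>S\<in>?F. \<Inter>l\<in>S. A l) \<le> (\<Sum>S\<in>?F. prob (\<Inter>l\<in>S. A l))"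
    by (rule finite_measure_subadditive_finite[OF finF]) (use ev in blast)
  also have "\<dots> \<le> (\<Sum>S\<in>?F. q^m)"
  proof (rule sum_mono)
    fix S assume S_in: "S \<in> ?F"
    have "prob (\<Inter>l\<in>S. A l) = (\<Prod>l\<in>S. prob (A l))"
      using indep S[OF S_in] S_in unfolding indep_events_def by auto
    also have "\<dots> \<le> (\<Prod>l\<in>S. q)"
      using S_in q by (intro prod_mono) auto
    finally show "prob (\<Inter>l\<in>S. A l) \<le> q^m" using S_in by simp
  qed
  also have "\<dots> = real (n choose m) * q^m"
    using n_subsets[of "{..<n}" m] by simp
  finally show "prob {\<omega>\<in>space M. m \<le> card {l\<in>{..<n}. \<omega> \<in> A l}} \<le> real (n choose m) * q^m"
    unfolding E .
qed

lemma emeasure_UN_UN_UN_le: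
  fixes E :: "nat \<Rightarrow> nat \<Rightarrow> nat \<Rightarrow> 'a set" and a :: "nat \<Rightarrow> real"
  assumes E: "\<And>d k i. E d k i \<in> sets M"
    and bound: "\<And>d k i. emeasure M (E d k i) \<le> ennreal (a d * (1/2)^k * (1/2)^i)"
    and a: "\<And>d. 0 \<le> a d" "summable a"
  shows "emeasure M (\<Union>d k i. E d k i) \<le> ennreal (4 * (\<Sum>d. a d))"
proof -
  have level_i: "emeasure M (\<Union>i. E d k i) \<le> ennreal (2 * (a d * (1/2)^k))" for d k
  proof -
    have "emeasure M (\<Union>i. E d k i) \<le> (\<Sum>i. emeasure M (E d k i))"
      using E by (intro emeasure_subadditive_countably) auto
    also have "\<dots> \<le> (\<Sum>i. ennreal (a d * (1/2)^k * (1/2)^i))"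
      by (intro suminf_le summableI bound)
    also have "\<dots> = ennreal (2 * (a d * (1/2)^k))"
      using a by (intro suminf_ennreal_geometric_half) simp
    finally show ?thesis .
  qed
  have level_k: "emeasure M (\<Union>k i. E d k i) \<le> ennreal (4 * a d)" for d
  proof -
    have "emeasure M (\<Union>k i. E d k i) \<le> (\<Sum>k. emeasure M (\<Union>i. E d k i))"
      using E by (intro emeasure_subadditive_countably) auto
    also have "\<dots> \<le> (\<Sum>k. ennreal (2 * a d * (1/2)^k))"
      using level_i by (intro suminf_le summableI) (simp add: mult.assoc)
    also have "\<dots> = ennreal (4 * a d)"
      using a by (subst suminf_ennreal_geometric_half) simp_all
    finally show ?thesis .
  qed
  have "emeasure M (\<Union>d k i. E d k i) \<le> (\<Sum>d. emeasure M (\<Union>k i. E d k i))"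
    using E by (intro emeasure_subadditive_countably) auto
  also have "\<dots> \<le> (\<Sum>d. ennreal (4 * a d))"
    by (intro suminf_le summableI level_k)
  also have "\<dots> = ennreal (4 * (\<Sum>d. a d))"
    using a by (simp add: suminf_ennreal2 summable_mult suminf_mult)
  finally show ?thesis .
qed

lemma (in finite_measure) AE_I_vanishing_exceptional_sets:
  assumes B: "\<And>N. B N \<in> sets M" and lim: "(\<lambda>N. measure M (B N)) \<longlonglongrightarrow> 0"
    and P: "\<And>N x. x \<in> space M \<Longrightarrow> x \<notin> B N \<Longrightarrow> P x"
  shows "AE x in M. P x"
proof (rule AE_I')
  have "measure M (\<Inter>N. B N) \<le> measure M (B N)" for N
    using B by (intro finite_measure_mono) auto
  then have "measure M (\<Inter>N. B N) \<le> 0"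
    using lim by (intro LIMSEQ_le_const) auto
  then show "(\<Inter>N. B N) \<in> null_sets M"
    using B by (simp add: null_sets_def emeasure_eq_measure measure_nonneg' antisym)
  show "{x\<in>space M. \<not> P x} \<subseteq> (\<Inter>N. B N)" using P by blast
qed

section \<open>Blocks of Wiener increments\<close>

lemma wiener_process_prob_space: "wiener_process M W \<Longrightarrow> prob_space M"
  unfolding wiener_process_def by blast

lemma wiener_indep_dyadic_incr:
  assumes "wiener_process M W"
  shows "prob_space.indep_vars M (\<lambda>_. borel) (\<lambda>i \<omega>. dyadic_incr (\<lambda>t. W t \<omega>) j i) {..<n}"
proof -
  define ts :: "nat \<Rightarrow> real" where "ts i = real i / 2^(j+1)" for i
  have "0 \<le> ts 0 \<and> (\<forall>i<n. ts i < ts (Suc i))" unfolding ts_def by (simp add: divide_strict_right_mono)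
  then have "prob_space.indep_vars M (\<lambda>_. borel) (\<lambda>i \<omega>. W (ts (Suc i)) \<omega> - W (ts i) \<omega>) {..<n}"
    using assms unfolding wiener_process_def by blast
  then show ?thesis unfolding ts_def dyadic_incr_def by simp
qed

lemma wiener_dyadic_incr_distributed:
  assumes "wiener_process M W"
  shows "distributed M lborel (\<lambda>\<omega>. dyadic_incr (\<lambda>t. W t \<omega>) j i)
           (\<lambda>x. ennreal (normal_density 0 (sqrt (1/2^(j+1))) x))"
proof -
  let ?s = "real i / 2^(j+1)" and ?t = "real (i+1) / 2^(j+1)"
  have "0 \<le> ?s \<and> ?s < ?t" by (simp add: divide_strict_right_mono)
  then have "distributed M lborel (\<lambda>\<omega>. W ?t \<omega> - W ?s \<omega>) (\<lambda>x. ennreal (normal_density 0 (sqrt (?t - ?s)) x))"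
    using assms unfolding wiener_process_def by blast
  moreover have "?t - ?s = 1/2^(j+1)" by (simp add: diff_divide_distrib[symmetric])
  ultimately show ?thesis unfolding dyadic_incr_def by simp
qed

lemma dyadic_block_subset: "l < 2^k \<Longrightarrow> dyadic_block d l \<subseteq> {..<2^(d+k+1)}"
proof -
  assume "l < 2^k"
  then have "(l+1)*2^(d+1) \<le> 2^k * 2^(d+1)" by (intro mult_right_mono) auto
  also have "\<dots> = (2::nat)^(d+k+1)" by (simp add: power_add[symmetric])
  finally show ?thesis unfolding dyadic_block_def by auto
qed

lemma disjoint_family_on_dyadic_block: "disjoint_family_on (dyadic_block d) L"
unfolding disjoint_family_on_def
proof (intro ballI impI)
  fix l l' :: nat assume "l \<noteq> l'"
  then have "(l+1)*2^(d+1) \<le> l'*2^(d+1) \<or> (l'+1)*2^(d+1) \<le> l*2^(d+1)"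
    by (metis Suc_eq_plus1 linorder_neqE_nat mult_le_mono1 Suc_leI)
  then show "dyadic_block d l \<inter> dyadic_block d l' = {}"
    unfolding dyadic_block_def by auto
qed

lemma card_dyadic_block: "card (dyadic_block d l) = 2^(d+1)"
  unfolding dyadic_block_def by (simp add: algebra_simps)

lemma wiener_indep_block_alt_sum:
  assumes W: "wiener_process M W"
  shows "prob_space.indep_vars M (\<lambda>_. borel) (\<lambda>l \<omega>. block_alt_sum (\<lambda>t. W t \<omega>) d k l) {..<2^k}"
proof -
  interpret prob_space M using wiener_process_prob_space[OF W] .
  let ?S = "\<lambda>i \<omega>. (-1)^i * dyadic_incr (\<lambda>t. W t \<omega>) (d+k) i"
  have "indep_vars (\<lambda>_. borel) ?S {..<2^(d+k+1)}"
    using indep_vars_compose2[OF wiener_indep_dyadic_incr[OF W], where Y="\<lambda>i x. (-1)^i * x" and N="\<lambda>_. borel"]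
    by simp
  then have "indep_vars (\<lambda>l. PiM (dyadic_block d l) (\<lambda>_. borel))
      (\<lambda>l \<omega>. restrict (\<lambda>i. ?S i \<omega>) (dyadic_block d l)) {..<2^k}"
    by (rule indep_vars_restrict) (use dyadic_block_subset disjoint_family_on_dyadic_block in auto)
  then have "indep_vars (\<lambda>_. borel)
      (\<lambda>l \<omega>. \<Sum>i\<in>dyadic_block d l. restrict (\<lambda>i. ?S i \<omega>) (dyadic_block d l) i) {..<2^k}"
    by (rule indep_vars_compose2) (intro borel_measurable_sum measurable_component_singleton)
  moreover have "(\<lambda>l \<omega>. \<Sum>i\<in>dyadic_block d l. restrict (\<lambda>i. ?S i \<omega>) (dyadic_block d l) i) =
      (\<lambda>l \<omega>. block_alt_sum (\<lambda>t. W t \<omega>) d k l)"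
    unfolding block_alt_sum_def by (intro ext sum.cong) auto
  ultimately show ?thesis by simp
qed

lemma wiener_block_alt_sum_distributed:
  assumes W: "wiener_process M W" and l: "l < 2^k"
  shows "distributed M lborel (\<lambda>\<omega>. block_alt_sum (\<lambda>t. W t \<omega>) d k l)
    (\<lambda>x. ennreal (normal_density 0 (sqrt (1/2^k)) x))"
proof -
  interpret prob_space M using wiener_process_prob_space[OF W] .
  let ?S = "\<lambda>i \<omega>. (-1)^i * dyadic_incr (\<lambda>t. W t \<omega>) (d+k) i"
  let ?\<sigma> = "sqrt (1/2^(d+k+1))"
  have I: "indep_vars (\<lambda>_. borel) ?S {..<2^(d+k+1)}"
    using indep_vars_compose2[OF wiener_indep_dyadic_incr[OF W], where Y="\<lambda>i x. (-1)^i * x" and N="\<lambda>_. borel"]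
    by simp
  have "distributed M lborel (?S i) (\<lambda>x. ennreal (normal_density 0 ?\<sigma> x))" for i
  proof -
    have "distributed M lborel (\<lambda>\<omega>. 0 + (-1)^i * dyadic_incr (\<lambda>t. W t \<omega>) (d+k) i)
        (\<lambda>x. ennreal (normal_density (0 + (-1)^i * 0) (\<bar>(-1)^i\<bar> * ?\<sigma>) x))"
      by (rule normal_density_affine[OF wiener_dyadic_incr_distributed[OF W]]) auto
    then show ?thesis by simp
  qed
  moreover have "finite (dyadic_block d l)" "dyadic_block d l \<noteq> {}"
    using card_dyadic_block[of d l] by (auto simp: dyadic_block_def)
  ultimately have "distributed M lborel (\<lambda>\<omega>. \<Sum>i\<in>dyadic_block d l. ?S i \<omega>)
      (\<lambda>x. ennreal (normal_density (\<Sum>i\<in>dyadic_block d l. 0) (sqrt (\<Sum>i\<in>dyadic_block d l. ?\<sigma>\<^sup>2)) x))"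
    by (intro sum_indep_normal[where \<sigma>="\<lambda>_. ?\<sigma>" and \<mu>="\<lambda>_. 0"]
        indep_vars_subset[OF I dyadic_block_subset[OF l]]) simp_all
  moreover have "(\<Sum>i\<in>dyadic_block d l. ?\<sigma>\<^sup>2) = 1/2^k"
    using card_dyadic_block[of d l] by (simp add: power_add)
  ultimately show ?thesis unfolding block_alt_sum_def by simp
qed

lemma measure_large_block_le:
  assumes W: "wiener_process M W" and l: "l < 2^k" and u: "0 \<le> u"
  shows "measure M {\<omega>\<in>space M. u < 2 powr (real k / 2) * \<bar>block_alt_sum (\<lambda>t. W t \<omega>) d k l\<bar>}
    \<le> sqrt 2 * exp (- u\<^sup>2 / 4)"
proof -
  interpret prob_space M using wiener_process_prob_space[OF W] .
  define c :: real where "c = 2 powr (real k / 2)"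
  have "c\<^sup>2 = 2 powr (real k / 2 * 2)" unfolding c_def by (simp add: powr_power)
  then have c: "0 < c" "c\<^sup>2 = 2^k" unfolding c_def by (simp_all add: powr_realpow)
  have "{\<omega>\<in>space M. u < c * \<bar>block_alt_sum (\<lambda>t. W t \<omega>) d k l\<bar>} =
      {\<omega>\<in>space M. u / c < \<bar>block_alt_sum (\<lambda>t. W t \<omega>) d k l\<bar>}"
    using c by (auto simp: pos_divide_less_eq mult.commute)
  moreover have "prob {\<omega>\<in>space M. u / c < \<bar>block_alt_sum (\<lambda>t. W t \<omega>) d k l\<bar>} \<le> sqrt 2 * exp (- u\<^sup>2 / 4)"
    using prob_normal_abs_gt_le[OF wiener_block_alt_sum_distributed[OF W l], where u="u / c"] u c
    by (simp add: power_divide)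
  ultimately show ?thesis unfolding c_def by simp
qed

lemma measure_many_large_blocks_le:
  assumes W: "wiener_process M W" and K5: "5 \<le> K" and Keps: "4 \<le> K\<^sup>2 * eps"
  shows "{\<omega>\<in>space M. many_large_blocks K eps (\<lambda>t. W t \<omega>) d k i} \<in> sets M"
    and "measure M {\<omega>\<in>space M. many_large_blocks K eps (\<lambda>t. W t \<omega>) d k i} \<le>
      exp 1 * sqrt 2 * exp (- K\<^sup>2 / 4) / (real d + 1)^2 * (1/2)^k * (1/2)^i"
proof -
  interpret prob_space M using wiener_process_prob_space[OF W] .
  define u where "u = K * (real d + 1) powr eps * sqrt (real (k - i) + 1)"
  define A where "A l = {\<omega>\<in>space M. u < 2 powr (real k / 2) * \<bar>block_alt_sum (\<lambda>t. W t \<omega>) d k l\<bar>}" for l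
  define y where "y = exp (- K\<^sup>2 * (real d + 1) powr (2*eps) / 4)"
  have indep: "indep_events A {..<2^k}"
    unfolding A_def by (rule indep_eventsI_indep_vars[OF wiener_indep_block_alt_sum[OF W]]) simp
  have "- u\<^sup>2 / 4 = real (k - i + 1) * (- K\<^sup>2 * (real d + 1) powr (2*eps) / 4)"
    by (simp add: u_def power_mult_distrib powr_power field_simps)
  then have y_pow: "y^(k - i + 1) = exp (- u\<^sup>2 / 4)"
    unfolding y_def by (simp only: exp_of_nat_mult)
  have "0 \<le> u" unfolding u_def using K5 by simp
  then have tail: "prob (A l) \<le> sqrt 2 * y^(k - i + 1)" if "l < 2^k" for l
    unfolding A_def y_pow by (rule measure_large_block_le[OF W that])
  have "1 \<le> (2::nat)^i" by simp
  note count = prob_card_indep_events_ge_le[OF indep tail this]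
  have E: "{\<omega>\<in>space M. many_large_blocks K eps (\<lambda>t. W t \<omega>) d k i} =
      {\<omega>\<in>space M. 2^i \<le> card {l\<in>{..<2^k}. \<omega> \<in> A l}}"
    unfolding many_large_blocks_def large_blocks_def A_def u_def by auto
  show "{\<omega>\<in>space M. many_large_blocks K eps (\<lambda>t. W t \<omega>) d k i} \<in> sets M"
    unfolding E by (rule count(1))
  have y: "0 \<le> y" "y \<le> exp (- K\<^sup>2 / 4) / (real d + 1)^2"
    unfolding y_def using exp_neg_level_le[OF Keps] by simp_all
  moreover have "exp (- K\<^sup>2 / 4) / (real d + 1)^2 \<le> exp (- K\<^sup>2 / 4)"
    by (simp add: divide_le_eq)
  ultimately have "y \<le> 1/64" using exp_neg_sq_quarter_le[OF K5] by linarith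
  have "measure M {\<omega>\<in>space M. many_large_blocks K eps (\<lambda>t. W t \<omega>) d k i} \<le>
      real (2^k choose 2^i) * (sqrt 2 * y^(k - i + 1))^(2^i)"
    unfolding E by (rule count(2))
  also have "\<dots> \<le> exp 1 * sqrt 2 * y * (1/2)^k * (1/2)^i"
    by (rule binomial_tail_product_le) (use y \<open>y \<le> 1/64\<close> in auto)
  also have "\<dots> \<le> exp 1 * sqrt 2 * (exp (- K\<^sup>2 / 4) / (real d + 1)^2) * (1/2)^k * (1/2)^i"
    using y by (intro mult_right_mono mult_left_mono) auto
  finally show "measure M {\<omega>\<in>space M. many_large_blocks K eps (\<lambda>t. W t \<omega>) d k i} \<le>
      exp 1 * sqrt 2 * exp (- K\<^sup>2 / 4) / (real d + 1)^2 * (1/2)^k * (1/2)^i"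
    by simp
qed

lemma measure_exceptional_set_le:
  assumes W: "wiener_process M W" and K5: "5 \<le> K" and Keps: "4 \<le> K\<^sup>2 * eps"
  defines "B \<equiv> (\<Union>d k i. {\<omega>\<in>space M. many_large_blocks K eps (\<lambda>t. W t \<omega>) d k i})"
  shows "B \<in> sets M"
    and "measure M B \<le> 4 * exp 1 * sqrt 2 * (\<Sum>d. 1 / (real d + 1)^2) * exp (- K\<^sup>2 / 4)"
proof -
  interpret prob_space M using wiener_process_prob_space[OF W] .
  note bad = measure_many_large_blocks_le[OF W K5 Keps]
  show "B \<in> sets M" unfolding B_def using bad(1) by blast
  define \<gamma> where "\<gamma> = exp 1 * sqrt 2 * exp (- K\<^sup>2 / 4)"
  have "emeasure M B \<le> ennreal (4 * (\<Sum>d. \<gamma> * (1 / (real d + 1)^2)))"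
    unfolding B_def
  proof (rule emeasure_UN_UN_UN_le)
    show "emeasure M {\<omega>\<in>space M. many_large_blocks K eps (\<lambda>t. W t \<omega>) d k i} \<le>
        ennreal (\<gamma> * (1 / (real d + 1)^2) * (1/2)^k * (1/2)^i)" for d k i
      using bad(2)[of d k i] unfolding \<gamma>_def by (simp add: emeasure_eq_measure ennreal_leI)
  qed (use bad(1) summable_mult[OF summable_inverse_Suc_squared, of \<gamma>] in \<open>auto simp: \<gamma>_def\<close>)
  also have "4 * (\<Sum>d. \<gamma> * (1 / (real d + 1)^2)) = 4 * exp 1 * sqrt 2 * (\<Sum>d. 1 / (real d + 1)^2) * exp (- K\<^sup>2 / 4)"
    unfolding suminf_mult[OF summable_inverse_Suc_squared] \<gamma>_def by (simp only: mult_ac)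
  finally show "measure M B \<le> 4 * exp 1 * sqrt 2 * (\<Sum>d. 1 / (real d + 1)^2) * exp (- K\<^sup>2 / 4)"
    by (simp add: emeasure_eq_measure suminf_nonneg summable_inverse_Suc_squared)
qed

theorem theorem2p8:
  fixes M :: "'a measure" and W :: "real \<Rightarrow> 'a \<Rightarrow> real" and eps :: real
  assumes "wiener_process M W" and "eps > 0"
  shows "AE \<omega> in M. A_norm eps (\<lambda>t. W t \<omega>) < \<infinity>"
proof -
  interpret prob_space M using wiener_process_prob_space[OF assms(1)] .
  define K where "K N = real N + 5 + 4 / eps" for N :: nat
  have K5: "5 \<le> K N" for N unfolding K_def using assms(2) by simp
  have Keps: "4 \<le> (K N)\<^sup>2 * eps" for N
  proof -
    have "4 \<le> K N * eps" unfolding K_def using assms(2) by (simp add: field_simps)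
    also have "\<dots> \<le> (K N)\<^sup>2 * eps" using K5[of N] assms(2) by (simp add: power2_eq_square)
    finally show ?thesis .
  qed
  define Bad where "Bad N = (\<Union>d k i. {\<omega>\<in>space M. many_large_blocks (K N) eps (\<lambda>t. W t \<omega>) d k i})" for N
  define C where "C = 4 * exp 1 * sqrt 2 * (\<Sum>d. 1 / (real d + 1)^2)"
  note exceptional = measure_exceptional_set_le[OF assms(1) K5 Keps, folded Bad_def C_def]
  show ?thesis
  proof (rule AE_I_vanishing_exceptional_sets)
    show "Bad N \<in> sets M" for N by (rule exceptional(1))
    have "(\<lambda>N. C * exp (- (K N)\<^sup>2 / 4)) \<longlonglongrightarrow> 0" unfolding K_def by real_asymp
    then show "(\<lambda>N. measure M (Bad N)) \<longlonglongrightarrow> 0"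
      by (rule Lim_null_comparison[rotated]) (use exceptional(2) in \<open>auto intro: always_eventually\<close>)
  next
    fix N \<omega> assume "\<omega> \<in> space M" "\<omega> \<notin> Bad N"
    then have "A_norm eps (\<lambda>t. W t \<omega>) \<le> ereal (K N)"
      using K5[of N] by (intro A_norm_le) (auto simp: Bad_def)
    then show "A_norm eps (\<lambda>t. W t \<omega>) < \<infinity>" using le_less_trans by fastforce
  qed
qed

end
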